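(* Assume $g$ satisfies (Hg) and (Hg1), and let $k>0$. Let $(a,d)\in\overline{\mathcal D^-(k)}\cap\mathcal H$ and $\underline a\in(0,a)$. Then $(\underline a,d)\in\mathcal D^-(k)$.
   Context: Let $\mathcal H=(0,1)\times(0,\infty)$. A function $g:\mathbb R\times[0,1]\to\mathbb R$, $(u,a)\mapsto g(u;a)$, satisfies (Hg) if it is $C^1$ and for every $a\in(0,1)$: $g(0;a)=g(a;a)=g(1;a)=0$, $g'(0;a)<0$, $g'(1;a)<0$, $g'(a;a)>0$ (where $g'=\partial_u g$), $g(v;a)>0$ for $v\in(-\infty,0)\cup(a,1)$ and $g(v;a)<0$ for $v\in(0,a)\cup(1,\infty)$. (Hg1): $\partial_a g(v;a)<0$ for all $a,v\in(0,1)$. For $A\in(0,1)$ let $d^\diamond(A;a)=\inf\{d>0:\ d(k+1)(A-v)-g(A;a)\ge -g(v;a)\ \text{for all }v\in[0,A]\}$ and $\mathcal D^-(k)=\{(a,d)\in\mathcal H:\ d^\diamond(A;a)<d<g(A;a)/A$ for some $A\in(a,1)\}$; the closure is taken in $\mathbb R^2$. *)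

theory Defs
  imports "HOL-Analysis.Analysis"
begin

text \<open>g u a is g(u;a). C^1 on R x [0,1]: a Frechet derivative within R x [0,1]
  given by continuous partial derivatives gu (w.r.t. u) and ga (w.r.t. a).\<close>
definition C1_g :: "(real \<Rightarrow> real \<Rightarrow> real) \<Rightarrow> bool" where
  "C1_g g \<longleftrightarrow> (\<exists>gu ga :: real \<Rightarrow> real \<Rightarrow> real.
      continuous_on (UNIV \<times> {0..1}) (\<lambda>(u,a). gu u a) \<and>
      continuous_on (UNIV \<times> {0..1}) (\<lambda>(u,a). ga u a) \<and>
      (\<forall>u a. a \<in> {0..1} \<longrightarrow>
         ((\<lambda>(x,y). g x y) has_derivative (\<lambda>(h,l). gu u a * h + ga u a * l))
           (at (u,a) within UNIV \<times> {0..1})))"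

definition Hg :: "(real \<Rightarrow> real \<Rightarrow> real) \<Rightarrow> bool" where
  "Hg g \<longleftrightarrow> C1_g g \<and>
     (\<forall>a. 0 < a \<and> a < 1 \<longrightarrow>
        g 0 a = 0 \<and> g a a = 0 \<and> g 1 a = 0 \<and>
        deriv (\<lambda>u. g u a) 0 < 0 \<and> deriv (\<lambda>u. g u a) 1 < 0 \<and> deriv (\<lambda>u. g u a) a > 0 \<and>
        (\<forall>v. (v < 0 \<or> (a < v \<and> v < 1)) \<longrightarrow> g v a > 0) \<and>
        (\<forall>v. ((0 < v \<and> v < a) \<or> 1 < v) \<longrightarrow> g v a < 0))"

definition Hg1 :: "(real \<Rightarrow> real \<Rightarrow> real) \<Rightarrow> bool" where
  "Hg1 g \<longleftrightarrow> (\<forall>a v. 0 < a \<and> a < 1 \<and> 0 < v \<and> v < 1 \<longrightarrow> deriv (\<lambda>b. g v b) a < 0)"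

text \<open>d-diamond as an extended real: the infimum of the empty set is +infinity.\<close>
definition d_diamond :: "(real \<Rightarrow> real \<Rightarrow> real) \<Rightarrow> real \<Rightarrow> real \<Rightarrow> real \<Rightarrow> ereal" where
  "d_diamond g k A a = Inf (ereal ` {d. d > 0 \<and>
      (\<forall>v\<in>{0..A}. d * (k + 1) * (A - v) - g A a \<ge> - g v a)})"

definition H_set :: "(real \<times> real) set" where
  "H_set = {0<..<1} \<times> {0<..}"

definition D_minus :: "(real \<Rightarrow> real \<Rightarrow> real) \<Rightarrow> real \<Rightarrow> (real \<times> real) set" where
  "D_minus g k = {(a,d). (a,d) \<in> H_set \<and>
      (\<exists>A. a < A \<and> A < 1 \<and> d_diamond g k A a < ereal d \<and> d < g A a / A)}"

end

theory Submission
  imports Defs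
begin

text \<open>By (Hg1), g(-, a_low) lies strictly above g(-, a') for every a' near a. A point
  (a', d') of D-(k) comes with some A' > a' where g(-, a') lies above the line of slope d'
  through the origin, while every chord of g(-, a') ending at A' has slope below (k+1) d'.
  If (a', d') is close enough to (a, d), the gap between the two graphs, which is uniform on
  compact subsets of (0, 1), pushes g(-, a_low) on [0, A'] strictly above a line of some slope
  c < (k+1) d; near 0, where the gap vanishes, that line is negative anyway. A minimiser Y of
  g(v, a_low) - c v on [0, Y0], with Y0 the first point beyond A' where g(-, a_low) drops back
  to a line of slope d, then witnesses (a_low, d) in D-(k).\<close>

definition chord_slopes_le :: "(real \<Rightarrow> real) \<Rightarrow> real \<Rightarrow> real \<Rightarrow> bool" where
  "chord_slopes_le f A s \<longleftrightarrow> (\<forall>v\<in>{0..A}. f A - f v \<le> s * (A - v))"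

lemma d_diamond_less_iff:
  assumes "k > -1"
  shows "d_diamond g k A a < ereal d \<longleftrightarrow>
    (\<exists>s. 0 < s \<and> s < (k + 1) * d \<and> chord_slopes_le (\<lambda>v. g v a) A s)"
proof
  assume "d_diamond g k A a < ereal d"
  then obtain e where e: "0 < e" "e < d"
    and chord: "\<forall>v\<in>{0..A}. e * (k + 1) * (A - v) - g A a \<ge> - g v a"
    unfolding d_diamond_def Inf_less_iff by auto
  have "0 < e * (k + 1)" and "e * (k + 1) < (k + 1) * d"
    using e assms by (simp_all add: mult.commute)
  moreover have "chord_slopes_le (\<lambda>v. g v a) A (e * (k + 1))"
    using chord unfolding chord_slopes_le_def by fastforce
  ultimately show "\<exists>s. 0 < s \<and> s < (k + 1) * d \<and> chord_slopes_le (\<lambda>v. g v a) A s"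
    by blast
next
  assume "\<exists>s. 0 < s \<and> s < (k + 1) * d \<and> chord_slopes_le (\<lambda>v. g v a) A s"
  then obtain s where s: "0 < s" "s < (k + 1) * d" and chord: "chord_slopes_le (\<lambda>v. g v a) A s"
    by blast
  define e where "e = s / (k + 1)"
  have e_k: "e * (k + 1) = s" and "0 < e" "e < d"
    using s assms by (simp_all add: e_def field_simps)
  moreover have "\<forall>v\<in>{0..A}. e * (k + 1) * (A - v) - g A a \<ge> - g v a"
    using chord unfolding e_k chord_slopes_le_def by fastforce
  ultimately have "d_diamond g k A a \<le> ereal e"
    unfolding d_diamond_def by (intro Inf_lower imageI) blast
  also have "\<dots> < ereal d" using \<open>e < d\<close> by simp
  finally show "d_diamond g k A a < ereal d" .
qed

lemma mem_D_minus_iff: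
  assumes "k > -1"
  shows "(a, d) \<in> D_minus g k \<longleftrightarrow> 0 < a \<and> a < 1 \<and> 0 < d \<and>
    (\<exists>A s. a < A \<and> A < 1 \<and> d * A < g A a \<and> 0 < s \<and> s < (k + 1) * d \<and>
       chord_slopes_le (\<lambda>v. g v a) A s)"
proof -
  have "d < g A a / A \<longleftrightarrow> d * A < g A a" if "0 < a" "a < A" for A
    using that by (simp add: pos_less_divide_eq)
  then show ?thesis
    unfolding D_minus_def H_set_def d_diamond_less_iff[OF assms] by auto
qed

lemma exists_point_above_line_with_chord_slopes_le:
  fixes G :: "real \<Rightarrow> real"
  assumes cont: "continuous_on {0..1} G"
    and A: "0 \<le> A" "A < 1" and l: "0 < l" and dc: "d \<le> c" and G1: "G 1 < d + l"
    and low: "\<And>v. v \<in> {0..A} \<Longrightarrow> l + d * A - c * (A - v) < G v"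
  shows "\<exists>Y. A < Y \<and> Y < 1 \<and> d * Y < G Y \<and> chord_slopes_le G Y c"
proof -
  define T where "T = {A..1} \<inter> (\<lambda>v. G v - d * v) -` {..l}"
  have cT: "continuous_on {A..1} (\<lambda>v. G v - d * v)"
    by (intro continuous_intros continuous_on_subset[OF cont]) (use A in auto)
  have "closed T" unfolding T_def
    by (rule continuous_closed_preimage[OF cT]) auto
  moreover have "1 \<in> T" using G1 A unfolding T_def by auto
  moreover have "bdd_below T" unfolding T_def by (rule bdd_belowI[of _ A]) auto
  ultimately have "Inf T \<in> T" using closed_contains_Inf by blast
  define Y0 where "Y0 = Inf T"
  have Y0: "A \<le> Y0" "Y0 \<le> 1" "G Y0 - d * Y0 \<le> l"
    using \<open>Inf T \<in> T\<close> unfolding Y0_def T_def by auto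
  have above_before_Y0: "l < G v - d * v" if "A \<le> v" "v < Y0" for v
  proof (rule ccontr)
    assume "\<not> ?thesis"
    then have "v \<in> T" using that Y0 unfolding T_def by auto
    then have "Y0 \<le> v" unfolding Y0_def by (rule cInf_lower) fact
    then show False using that by simp
  qed
  have G_Y0: "G Y0 - d * Y0 = l"
  proof (rule ccontr)
    assume "G Y0 - d * Y0 \<noteq> l"
    then have less: "G Y0 - d * Y0 < l" using Y0 by simp
    have "l < G A - d * A" using low[of A] A by simp
    then obtain x where x: "A \<le> x" "x \<le> Y0" "G x - d * x = l"
      using IVT2'[of "\<lambda>v. G v - d * v" Y0 l A] less Y0 continuous_on_subset[OF cT] by auto
    then have "x = Y0" using above_before_Y0[of x] by force
    then show False using x less by simp
  qed
  have "Y0 < 1" using G_Y0 G1 Y0 by (cases "Y0 = 1") auto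
  have "A < Y0" using G_Y0 low[of A] A Y0 by (cases "A = Y0") auto
  have "continuous_on {0..Y0} (\<lambda>v. G v - c * v)"
    by (intro continuous_intros continuous_on_subset[OF cont]) (use Y0 in auto)
  then obtain Y where Y: "Y \<in> {0..Y0}" and Y_min: "\<And>v. v \<in> {0..Y0} \<Longrightarrow> G Y - c * Y \<le> G v - c * v"
    using continuous_attains_inf[of "{0..Y0}" "\<lambda>v. G v - c * v"] A Y0 by auto
  have "A < Y"
  proof (rule ccontr)
    assume "\<not> A < Y"
    then have "l + d * A - c * (A - Y) < G Y" using low Y by auto
    moreover have "(c - d) * (Y0 - A) \<ge> 0" using dc Y0 by simp
    moreover have "G Y - c * Y \<le> G Y0 - c * Y0" using Y_min[of Y0] A Y0 by auto
    ultimately show False using G_Y0 by (simp add: algebra_simps)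
  qed
  moreover have "d * Y < G Y"
  proof (cases "Y = Y0")
    case True then show ?thesis using G_Y0 l by simp
  next
    case False then show ?thesis using above_before_Y0[of Y] Y \<open>A < Y\<close> l by simp
  qed
  moreover have "chord_slopes_le G Y c"
    unfolding chord_slopes_le_def using Y_min Y by (auto simp: algebra_simps)
  ultimately show ?thesis using Y \<open>Y0 < 1\<close> by auto
qed

lemma mult_le_bound_if_unit_interval:
  fixes x M t :: real
  assumes "x \<le> M" "0 \<le> M" "0 \<le> t" "t \<le> 1"
  shows "x * t \<le> M"
proof (cases "x \<le> 0")
  case True then show ?thesis using assms mult_nonpos_nonneg[of x t] by linarith
next
  case False then show ?thesis using assms mult_left_le[of t x] by linarith
qed

lemma chord_slopes_le_transfer:
  fixes H F f :: "real \<Rightarrow> real"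
  assumes contH: "continuous_on {0..1} H" and "H 1 = 0"
    and k: "0 < k" and d: "0 < d" and m: "0 < m"
    and margin: "\<And>v. v \<in> {0..A} \<Longrightarrow>
      m \<le> max (H v - F v) (H v + k * d * \<alpha> / 2 - (k + 1) * d * v)"
    and below: "\<And>v. v \<in> {0..A} \<Longrightarrow> f v \<le> F v"
    and close: "(k + 2) * \<bar>d' - d\<bar> \<le> m / 4"
    and A: "0 < \<alpha>" "\<alpha> < A" "A < 1"
    and f_A: "d' * A < f A" and s': "s' < (k + 1) * d'" and chord: "chord_slopes_le f A s'"
  shows "\<exists>Y s. A < Y \<and> Y < 1 \<and> 0 < s \<and> s < (k + 1) * d \<and> d * Y < H Y \<and> chord_slopes_le H Y s"
proof -
  define \<tau> where "\<tau> = min (m / 4) (k * d / 2)"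
  define c where "c = (k + 1) * d - \<tau>"
  have \<tau>: "0 < \<tau>" "\<tau> \<le> m / 4" "\<tau> \<le> k * d / 2" using m k d unfolding \<tau>_def by auto
  have c: "d + k * d / 2 \<le> c" "c < (k + 1) * d" using \<tau> unfolding c_def by (simp_all add: algebra_simps)
  have "0 \<le> k * d" using k d by simp
  then have "d \<le> c" "0 < c" using c d by linarith+
  have "(d - d') * A \<le> \<bar>d' - d\<bar>" using A by (intro mult_le_bound_if_unit_interval) auto
  have low: "m / 4 + d * A - c * (A - v) < H v" if v: "v \<in> {0..A}" for v
  proof (cases "m \<le> H v - F v")
    case True
    have "(k + 1) * (d' - d) \<le> (k + 1) * \<bar>d' - d\<bar>" using k by (intro mult_left_mono) auto
    then have "s' - c \<le> \<tau> + (k + 1) * \<bar>d' - d\<bar>"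
      using s' unfolding c_def by (simp add: algebra_simps)
    then have "(s' - c) * (A - v) \<le> \<tau> + (k + 1) * \<bar>d' - d\<bar>"
      using \<tau> k v A by (intro mult_le_bound_if_unit_interval) auto
    moreover have "f A - f v \<le> s' * (A - v)" using chord v unfolding chord_slopes_le_def by blast
    moreover have "s' * (A - v) = (s' - c) * (A - v) + c * (A - v)" by (simp add: algebra_simps)
    moreover have "d' * A = d * A - (d - d') * A" by (simp add: algebra_simps)
    moreover have "(k + 2) * \<bar>d' - d\<bar> = \<bar>d' - d\<bar> + (k + 1) * \<bar>d' - d\<bar>" by (simp add: algebra_simps)
    ultimately show ?thesis
      using True below[OF v] f_A \<open>(d - d') * A \<le> \<bar>d' - d\<bar>\<close> close \<tau> m by linarith
  next
    case False
    then have margin_v: "m \<le> H v + k * d * \<alpha> / 2 - (k + 1) * d * v" using margin[OF v] by simp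
    have "c * v \<le> (k + 1) * d * v" using c v by (intro mult_right_mono) auto
    moreover have "k * d * \<alpha> / 2 \<le> (c - d) * A"
      using mult_mono[of "k * d / 2" "c - d" \<alpha> A] c A \<open>0 \<le> k * d\<close> by simp
    moreover have "c * (A - v) = (c - d) * A + d * A - c * v" by (simp add: algebra_simps)
    ultimately show ?thesis using margin_v m by linarith
  qed
  have "\<exists>Y. A < Y \<and> Y < 1 \<and> d * Y < H Y \<and> chord_slopes_le H Y c"
    by (rule exists_point_above_line_with_chord_slopes_le[OF contH _ _ _ \<open>d \<le> c\<close> _ low])
      (use A m d \<open>H 1 = 0\<close> in auto)
  then show ?thesis using \<open>0 < c\<close> c by blast
qed

lemma continuous_on_compact_pos_lower_bound:
  fixes f :: "'a::topological_space \<Rightarrow> real"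
  assumes "compact S" "continuous_on S f" "\<And>x. x \<in> S \<Longrightarrow> 0 < f x"
  obtains m where "0 < m" "\<And>x. x \<in> S \<Longrightarrow> m \<le> f x"
proof (cases "S = {}")
  case False
  then obtain x0 where "x0 \<in> S" "\<forall>x\<in>S. f x0 \<le> f x"
    using continuous_attains_inf assms by blast
  then show ?thesis using that assms(3) by blast
qed (use that[of 1] in auto)

lemma continuous_on_less_near_right_end:
  fixes F :: "real \<Rightarrow> real"
  assumes "continuous_on {a..b} F" "a < b" "F b < y"
  obtains B where "a \<le> B" "B < b" "\<And>v. B \<le> v \<Longrightarrow> v \<le> b \<Longrightarrow> F v < y"
proof -
  have "eventually (\<lambda>v. F v < y) (at b within {a..b})"
    using assms by (intro order_tendstoD) (auto simp: continuous_on_eq_continuous_within continuous_within)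
  then obtain \<delta> where "0 < \<delta>" and \<delta>: "\<And>v. v \<in> {a..b} \<Longrightarrow> v \<noteq> b \<Longrightarrow> dist v b < \<delta> \<Longrightarrow> F v < y"
    unfolding eventually_at by blast
  show ?thesis
  proof (rule that[of "max a (b - \<delta> / 2)"])
    show "F v < y" if "max a (b - \<delta> / 2) \<le> v" "v \<le> b" for v
      using \<delta>[of v] that \<open>0 < \<delta>\<close> \<open>F b < y\<close> by (cases "v = b") (auto simp: dist_real_def)
  qed (use \<open>a < b\<close> \<open>0 < \<delta>\<close> in auto)
qed

lemma chord_slopes_le_stable:
  fixes H F :: "real \<Rightarrow> real"
  assumes contH: "continuous_on {0..1} H" and contF: "continuous_on {0..1} F"
    and "H 0 = 0" "H 1 = 0" "F 1 = 0"
    and gap: "\<And>v. 0 < v \<Longrightarrow> v < 1 \<Longrightarrow> F v < H v"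
    and k: "0 < k" and d: "0 < d" and \<alpha>: "0 < \<alpha>"
  obtains \<epsilon> where "0 < \<epsilon>"
    and "\<And>f d' A s'. (\<And>v. v \<in> {0..1} \<Longrightarrow> f v \<le> F v) \<Longrightarrow> \<bar>d' - d\<bar> < \<epsilon> \<Longrightarrow>
      \<alpha> < A \<Longrightarrow> A < 1 \<Longrightarrow> d' * A < f A \<Longrightarrow> s' < (k + 1) * d' \<Longrightarrow> chord_slopes_le f A s' \<Longrightarrow>
      \<exists>Y s. A < Y \<and> Y < 1 \<and> 0 < s \<and> s < (k + 1) * d \<and> d * Y < H Y \<and> chord_slopes_le H Y s"
proof -
  obtain B where B: "0 \<le> B" "B < 1" and F_near_1: "\<And>v. B \<le> v \<Longrightarrow> v \<le> 1 \<Longrightarrow> F v < d * \<alpha> / 2"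
    using continuous_on_less_near_right_end[OF contF, of "d * \<alpha> / 2"] \<open>F 1 = 0\<close> d \<alpha> by auto
  txt \<open>The first term is the gap between the graphs; the second one is what a line of
    slope close to (k+1) d through a point beyond \<alpha> leaves below H, and it covers v = 0.\<close>
  define \<Phi> where "\<Phi> v = max (H v - F v) (H v + k * d * \<alpha> / 2 - (k + 1) * d * v)" for v
  have "continuous_on {0..B} \<Phi>"
    unfolding \<Phi>_def using B
    by (intro continuous_intros continuous_on_subset[OF contH] continuous_on_subset[OF contF]) auto
  moreover have "0 < \<Phi> v" if "v \<in> {0..B}" for v
  proof (cases "v = 0")
    case True then show ?thesis using k d \<alpha> \<open>H 0 = 0\<close> unfolding \<Phi>_def by (simp add: less_max_iff_disj)
  next
    case False then show ?thesis using gap[of v] that B unfolding \<Phi>_def by auto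
  qed
  ultimately obtain m where m: "0 < m" and margin: "\<And>v. v \<in> {0..B} \<Longrightarrow> m \<le> \<Phi> v"
    using continuous_on_compact_pos_lower_bound[of "{0..B}" \<Phi>] by blast
  define \<epsilon> where "\<epsilon> = min (m / (4 * (k + 2))) (d / 2)"
  show thesis
  proof (rule that)
    show "0 < \<epsilon>" using m k d unfolding \<epsilon>_def by simp
    fix f d' A s'
    assume below: "\<And>v. v \<in> {0..1} \<Longrightarrow> f v \<le> F v" and close: "\<bar>d' - d\<bar> < \<epsilon>"
      and A: "\<alpha> < A" "A < 1" and f_A: "d' * A < f A"
      and s': "s' < (k + 1) * d'" and chord: "chord_slopes_le f A s'"
    have "(k + 2) * \<bar>d' - d\<bar> \<le> m / 4"
      using close k unfolding \<epsilon>_def by (simp add: field_simps)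
    have "A \<le> B"
    proof (rule ccontr)
      assume "\<not> A \<le> B"
      have "\<bar>d' - d\<bar> < d / 2" using close unfolding \<epsilon>_def by simp
      then have "d / 2 \<le> d'" by linarith
      then have "d / 2 * \<alpha> \<le> d' * A" using d \<alpha> A by (intro mult_mono) auto
      moreover have "f A \<le> F A" using below A \<alpha> by simp
      ultimately show False using F_near_1[of A] \<open>\<not> A \<le> B\<close> A f_A by simp
    qed
    show "\<exists>Y s. A < Y \<and> Y < 1 \<and> 0 < s \<and> s < (k + 1) * d \<and> d * Y < H Y \<and> chord_slopes_le H Y s"
    proof (rule chord_slopes_le_transfer[OF contH \<open>H 1 = 0\<close> k d m _ _
          \<open>(k + 2) * \<bar>d' - d\<bar> \<le> m / 4\<close> \<alpha> A f_A s' chord])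
      show "m \<le> max (H v - F v) (H v + k * d * \<alpha> / 2 - (k + 1) * d * v)" if "v \<in> {0..A}" for v
        using margin[of v] that \<open>A \<le> B\<close> unfolding \<Phi>_def by simp
      show "f v \<le> F v" if "v \<in> {0..A}" for v using below that A by simp
    qed
  qed
qed

lemma C1_g_partial_derivatives:
  assumes "C1_g g"
  obtains gu ga where
    "\<And>u b. b \<in> {0..1} \<Longrightarrow> ((\<lambda>u. g u b) has_real_derivative gu u b) (at u)"
    "\<And>v b. 0 < b \<Longrightarrow> b < 1 \<Longrightarrow> ((\<lambda>b. g v b) has_real_derivative ga v b) (at b)"
proof -
  from assms obtain gu ga :: "real \<Rightarrow> real \<Rightarrow> real" where
    D: "\<And>p. p \<in> UNIV \<times> {0..1} \<Longrightarrow> ((\<lambda>(x,y). g x y) has_derivative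
      (\<lambda>p. \<lambda>(h,l). gu (fst p) (snd p) * h + ga (fst p) (snd p) * l) p) (at p within UNIV \<times> {0..1})"
    unfolding C1_g_def by fastforce
  have "((\<lambda>u. g u b) has_real_derivative gu u b) (at u)" if "b \<in> {0..1}" for u b
  proof -
    have "((\<lambda>x. (\<lambda>(x,y). g x y) (x, b)) has_derivative
        (\<lambda>h. (\<lambda>p. \<lambda>(h,l). gu (fst p) (snd p) * h + ga (fst p) (snd p) * l) (u, b) (h, 0)))
        (at u within UNIV)"
      by (rule has_derivative_in_compose2[OF D, of "\<lambda>x. (x, b)" UNIV])
        (use that in \<open>auto intro!: derivative_eq_intros\<close>)
    then show ?thesis by (simp add: has_field_derivative_def)
  qed
  moreover have "((\<lambda>b. g v b) has_real_derivative ga v b) (at b)" if "0 < b" "b < 1" for v b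
  proof -
    have "((\<lambda>y. (\<lambda>(x,y). g x y) (v, y)) has_derivative
        (\<lambda>l. (\<lambda>p. \<lambda>(h,l). gu (fst p) (snd p) * h + ga (fst p) (snd p) * l) (v, b) (0, l)))
        (at b within {0..1})"
      by (rule has_derivative_in_compose2[OF D, of "\<lambda>y. (v, y)" "{0..1}"])
        (use that in \<open>auto intro!: derivative_eq_intros\<close>)
    then show ?thesis using that by (simp add: has_field_derivative_def at_within_Icc_at)
  qed
  ultimately show ?thesis using that by blast
qed

lemma C1_g_continuous_on:
  assumes "C1_g g" "b \<in> {0..1}"
  shows "continuous_on S (\<lambda>u. g u b)"
  using C1_g_partial_derivatives[OF assms(1)] assms(2)
  by (metis DERIV_isCont continuous_at_imp_continuous_on)

lemma Hg1_strict_antimono: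
  assumes "C1_g g" "Hg1 g" and v: "0 < v" "v < 1" and b: "0 < b1" "b1 < b2" "b2 < 1"
  shows "g v b2 < g v b1"
proof -
  obtain ga where ga: "\<And>b. 0 < b \<Longrightarrow> b < 1 \<Longrightarrow> ((\<lambda>b. g v b) has_real_derivative ga v b) (at b)"
    using C1_g_partial_derivatives[OF assms(1)] by metis
  have "ga v x < 0" if "b1 \<le> x" "x \<le> b2" for x
  proof -
    have "0 < x" "x < 1" using that b by auto
    then show ?thesis
      using assms(2) v DERIV_imp_deriv[OF ga] unfolding Hg1_def by fastforce
  qed
  then show ?thesis
    using DERIV_neg_imp_decreasing[OF \<open>b1 < b2\<close>, of "\<lambda>b. g v b"] ga b by force
qed

lemma Hg_Hg1_antimono:
  assumes "Hg g" "Hg1 g" and v: "v \<in> {0..1}" and b: "0 < b1" "b1 \<le> b2" "b2 < 1"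
  shows "g v b2 \<le> g v b1"
proof (cases "b1 = b2 \<or> v = 0 \<or> v = 1")
  case True then show ?thesis using \<open>Hg g\<close> b unfolding Hg_def by auto
next
  case False then show ?thesis
    using Hg1_strict_antimono[OF _ \<open>Hg1 g\<close>, of v b1 b2] \<open>Hg g\<close> v b unfolding Hg_def by auto
qed

lemma D_minus_transfer_to_smaller_a:
  assumes "Hg g" "Hg1 g" "0 < k" "0 < d" and a: "0 < a_low" "a_low < \<alpha>" "\<alpha> < 1"
  obtains \<epsilon> where "0 < \<epsilon>"
    and "\<And>a' d'. (a', d') \<in> D_minus g k \<Longrightarrow> \<alpha> < a' \<Longrightarrow> \<bar>d' - d\<bar> < \<epsilon> \<Longrightarrow> (a_low, d) \<in> D_minus g k"
proof -
  have "k > -1" using \<open>0 < k\<close> by simp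
  have C1: "C1_g g" and zeros: "\<And>b. 0 < b \<Longrightarrow> b < 1 \<Longrightarrow> g 0 b = 0 \<and> g 1 b = 0"
    using \<open>Hg g\<close> unfolding Hg_def by blast+
  obtain \<epsilon> where "0 < \<epsilon>" and stable: "\<And>f d' A s'. (\<And>v. v \<in> {0..1} \<Longrightarrow> f v \<le> g v \<alpha>) \<Longrightarrow>
      \<bar>d' - d\<bar> < \<epsilon> \<Longrightarrow> \<alpha> < A \<Longrightarrow> A < 1 \<Longrightarrow> d' * A < f A \<Longrightarrow> s' < (k + 1) * d' \<Longrightarrow>
      chord_slopes_le f A s' \<Longrightarrow> \<exists>Y s. A < Y \<and> Y < 1 \<and> 0 < s \<and> s < (k + 1) * d \<and>
        d * Y < g Y a_low \<and> chord_slopes_le (\<lambda>v. g v a_low) Y s"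
  proof (rule chord_slopes_le_stable[of "\<lambda>v. g v a_low" "\<lambda>v. g v \<alpha>" k d \<alpha>])
    show "continuous_on {0..1} (\<lambda>v. g v a_low)" "continuous_on {0..1} (\<lambda>v. g v \<alpha>)"
      using C1_g_continuous_on[OF C1] a by auto
    show "g 0 a_low = 0" "g 1 a_low = 0" "g 1 \<alpha> = 0" using zeros a by auto
    show "g v \<alpha> < g v a_low" if "0 < v" "v < 1" for v
      using Hg1_strict_antimono[OF C1 \<open>Hg1 g\<close>] that a by auto
  qed (use that \<open>0 < k\<close> \<open>0 < d\<close> a in auto)
  show thesis
  proof (rule that[OF \<open>0 < \<epsilon>\<close>])
    fix a' d' assume "(a', d') \<in> D_minus g k" "\<alpha> < a'" "\<bar>d' - d\<bar> < \<epsilon>"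
    then obtain A s' where "a' < 1" "a' < A" "A < 1" "d' * A < g A a'"
      and "s' < (k + 1) * d'" and "chord_slopes_le (\<lambda>v. g v a') A s'"
      unfolding mem_D_minus_iff[OF \<open>k > -1\<close>] by blast
    moreover have "g v a' \<le> g v \<alpha>" if "v \<in> {0..1}" for v
      using Hg_Hg1_antimono[OF \<open>Hg g\<close> \<open>Hg1 g\<close> that] \<open>\<alpha> < a'\<close> \<open>a' < 1\<close> a by simp
    ultimately obtain Y s where "A < Y" "Y < 1" "0 < s" "s < (k + 1) * d"
      "d * Y < g Y a_low" "chord_slopes_le (\<lambda>v. g v a_low) Y s"
      using stable[of "\<lambda>v. g v a'" d' A s'] \<open>\<alpha> < a'\<close> \<open>\<bar>d' - d\<bar> < \<epsilon>\<close> by auto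
    moreover have "a_low < Y" using \<open>A < Y\<close> \<open>a' < A\<close> \<open>\<alpha> < a'\<close> a by linarith
    ultimately show "(a_low, d) \<in> D_minus g k"
      unfolding mem_D_minus_iff[OF \<open>k > -1\<close>] using a \<open>0 < d\<close> by auto
  qed
qed

theorem lemma5p4:
  fixes g :: "real \<Rightarrow> real \<Rightarrow> real" and k a d a_low :: real
  assumes "Hg g" and "Hg1 g" and "k > 0"
    and "(a, d) \<in> closure (D_minus g k) \<inter> H_set"
    and "0 < a_low" and "a_low < a"
  shows "(a_low, d) \<in> D_minus g k"
proof -
  from assms(4) have closure: "(a, d) \<in> closure (D_minus g k)" and "a < 1" "0 < d"
    by (auto simp: H_set_def)
  define \<alpha> where "\<alpha> = (a_low + a) / 2"
  have \<alpha>: "a_low < \<alpha>" "\<alpha> < a" using \<open>a_low < a\<close> unfolding \<alpha>_def by auto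
  with \<open>a < 1\<close> have "\<alpha> < 1" by simp
  obtain \<epsilon> where "0 < \<epsilon>" and transfer: "\<And>a' d'. (a', d') \<in> D_minus g k \<Longrightarrow> \<alpha> < a' \<Longrightarrow>
      \<bar>d' - d\<bar> < \<epsilon> \<Longrightarrow> (a_low, d) \<in> D_minus g k"
    using D_minus_transfer_to_smaller_a[OF \<open>Hg g\<close> \<open>Hg1 g\<close> \<open>k > 0\<close> \<open>0 < d\<close> \<open>0 < a_low\<close>
        \<open>a_low < \<alpha>\<close> \<open>\<alpha> < 1\<close>] by blast
  obtain a' d' where mem: "(a', d') \<in> D_minus g k" and near: "dist (a', d') (a, d) < min \<epsilon> (a - \<alpha>)"
    using closure \<open>0 < \<epsilon>\<close> \<alpha> unfolding closure_approachable
    by (metis diff_gt_0_iff_gt min_less_iff_conj prod.exhaust)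
  have "\<alpha> < a'" "\<bar>d' - d\<bar> < \<epsilon>"
    using near dist_fst_le[of "(a', d')" "(a, d)"] dist_snd_le[of "(a', d')" "(a, d)"]
    by (auto simp: dist_real_def)
  then show ?thesis by (rule transfer[OF mem])
qed

end
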